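(* Let $q>1$, let $\chi_q$ be a real Dirichlet character modulo $q$, and let $\tilde\chi_q$ be any modified character associated with $\chi_q$. Then for every integer $k\ge1$ there exists $n\in\mathbb{N}\cup\{0\}$ such that $$\sum_{m=1}^{k}\tilde\chi_q(n+m)\ \ge 0,$$ equivalently $\#\{1\le m\le k:\tilde\chi_q(n+m)=-1\}\le k/2$. In particular $\delta(k)\le k/2$ for all $k\ge1$.
   Context: For an integer $q>1$ and a real-valued (i.e. $\{0,\pm1\}$-valued) Dirichlet character $\chi_q$ modulo $q$ (principal or not), a modified character $\tilde\chi_q$ is the completely multiplicative function $\mathbb{N}\to\{+1,-1\}$ defined on primes by $\tilde\chi_q(p)=\chi_q(p)$ if $p\nmid q$, and $\tilde\chi_q(p)=\eta(p)$ if $p\mid q$, where $\eta(p)\in\{+1,-1\}$ is an arbitrary choice of sign for each prime $p\mid q$. Here $\delta(k)$ denotes the supremum, over all $q>1$, all real characters $\chi_q$ mod $q$ and all sign choices $\eta$, of $\min_{n\ge0}\#\{1\le m\le k:\tilde\chi_q(n+m)=-1\}$. *)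

theory Defs
  imports "HOL-Computational_Algebra.Primes"
begin

definition real_dirichlet_char :: "nat \<Rightarrow> (nat \<Rightarrow> int) \<Rightarrow> bool" where
  "real_dirichlet_char q \<chi> \<longleftrightarrow>
     (\<forall>n. \<chi> (n + q) = \<chi> n) \<and>
     (\<forall>m n. \<chi> (m * n) = \<chi> m * \<chi> n) \<and>
     (\<forall>n. coprime n q \<longrightarrow> \<chi> n \<in> {1, -1}) \<and>
     (\<forall>n. \<not> coprime n q \<longrightarrow> \<chi> n = 0)"

definition modified_char :: "nat \<Rightarrow> (nat \<Rightarrow> int) \<Rightarrow> (nat \<Rightarrow> int) \<Rightarrow> bool" where
  "modified_char q \<chi> f \<longleftrightarrow>
     f 1 = 1 \<and>
     (\<forall>m n. 0 < m \<longrightarrow> 0 < n \<longrightarrow> f (m * n) = f m * f n) \<and>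
     (\<forall>p. prime p \<longrightarrow> \<not> p dvd q \<longrightarrow> f p = \<chi> p) \<and>
     (\<forall>p. prime p \<longrightarrow> p dvd q \<longrightarrow> f p \<in> {1, -1})"

definition neg_count :: "(nat \<Rightarrow> int) \<Rightarrow> nat \<Rightarrow> nat \<Rightarrow> nat" where
  "neg_count f k n = card {m \<in> {1..k}. f (n + m) = -1}"

definition delta :: "nat \<Rightarrow> nat" where
  "delta k = Sup {c. \<exists>q \<chi> f. 1 < q \<and> real_dirichlet_char q \<chi> \<and> modified_char q \<chi> f \<and>
                       c = (LEAST c'. \<exists>n. neg_count f k n = c')}"

end

theory Submission
  imports Defs "HOL-Analysis.Harmonic_Numbers"
begin

text \<open>Because \<open>f\<close> is completely multiplicative with values \<open>\<plusminus>1\<close>, the divisor sum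
  \<open>g(n) = \<Sum>\<^bsub>d dvd n\<^esub> f(d)\<close> is multiplicative, and at a prime power it is a geometric sum
  of \<open>\<plusminus>1\<close>; hence \<open>g \<ge> 0\<close>. Summing \<open>g\<close> over \<open>n \<le> N\<close> gives \<open>\<Sum>\<^bsub>m \<le> N\<^esub> S(N div m) \<ge> 0\<close>,
  where \<open>S\<close> is the partial-sum function of \<open>f\<close>. If every window of \<open>k\<close> consecutive values
  of \<open>f\<close> had negative sum, then \<open>k S(x) \<le> k(k+1) - x\<close>, so the left-hand side would be at
  most \<open>N(k+1) - (N/k)(H\<^sub>N - 1)\<close>, which is negative for large \<open>N\<close> because the harmonic
  numbers \<open>H\<^sub>N\<close> diverge.\<close>

(* \<chi> is used as a variable name below, not as the vector binder of HOL-Analysis. *)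
unbundle no vec_syntax

lemma bij_betw_divisors_coprime_mult:
  fixes a b :: nat
  assumes "coprime a b"
  shows "bij_betw (\<lambda>(x, y). x * y) ({x. x dvd a} \<times> {y. y dvd b}) {d. d dvd a * b}"
proof -
  have factors: "gcd (x * y) a = x \<and> gcd (x * y) b = y" if "x dvd a" "y dvd b" for x y
  proof -
    from assms that have "coprime a y" "coprime b x"
      by (auto intro: coprime_imp_coprime dvd_trans)
    with that show ?thesis
      by (simp add: gcd_mult_left_right_cancel gcd_mult_left_left_cancel gcd_nat.absorb1)
  qed
  have product_of_gcds: "gcd d a * gcd d b = d" if "d dvd a * b" for d
  proof -
    from that obtain x y where "d = x * y" "x dvd a" "y dvd b"
      by (rule dvd_productE)
    with factors show ?thesis by simp
  qed
  show ?thesis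
    by (rule bij_betw_byWitness[where f' = "\<lambda>d. (gcd d a, gcd d b)"])
       (use factors product_of_gcds in \<open>auto intro: mult_dvd_mono\<close>)
qed

lemma sum_power_sign_nonneg:
  fixes c :: "'a::linordered_idom"
  assumes "c \<in> {1, -1}"
  shows "0 \<le> (\<Sum>i\<le>k. c ^ i)"
proof -
  have "(\<Sum>i\<le>k. (-1::'a) ^ i) = (if even k then 1 else 0)"
    by (induction k) auto
  with assms show ?thesis by auto
qed

lemma Suc_div_eq: "0 < m \<Longrightarrow> Suc N div m = N div m + (if m dvd Suc N then 1 else 0)"
  for m N :: nat
  by (auto simp: div_Suc dvd_eq_mod_eq_0 mod_Suc)

lemma sum_divisor_sums_eq:
  fixes f :: "nat \<Rightarrow> 'a::comm_monoid_add"
  shows "(\<Sum>n=1..N. \<Sum>d | d dvd n. f d) = (\<Sum>m=1..N. \<Sum>j=1..N div m. f j)"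
proof (induction N)
  case (Suc N)
  have step: "(\<Sum>j=1..Suc N div m. f j)
      = (\<Sum>j=1..N div m. f j) + (if m dvd Suc N then f (Suc N div m) else 0)"
    if "m \<in> {1..Suc N}" for m
    using that Suc_div_eq[of m N] by auto
  have "(\<Sum>m=1..Suc N. \<Sum>j=1..Suc N div m. f j)
      = (\<Sum>m=1..Suc N. (\<Sum>j=1..N div m. f j) + (if m dvd Suc N then f (Suc N div m) else 0))"
    by (rule sum.cong[OF refl step])
  also have "\<dots> = (\<Sum>m=1..Suc N. \<Sum>j=1..N div m. f j)
      + (\<Sum>m=1..Suc N. if m dvd Suc N then f (Suc N div m) else 0)"
    by (rule sum.distrib)
  also have "(\<Sum>m=1..Suc N. \<Sum>j=1..N div m. f j) = (\<Sum>n=1..N. \<Sum>d | d dvd n. f d)"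
    using Suc by simp
  also have "(\<Sum>m=1..Suc N. if m dvd Suc N then f (Suc N div m) else 0)
      = (\<Sum>m \<in> {m \<in> {1..Suc N}. m dvd Suc N}. f (Suc N div m))"
    by (rule sum.inter_filter[symmetric]) simp
  also have "{m \<in> {1..Suc N}. m dvd Suc N} = {d. d dvd Suc N}"
    by (auto simp: dvd_imp_le Suc_le_eq intro: gr0I)
  also have "(\<Sum>m | m dvd Suc N. f (Suc N div m)) = (\<Sum>d | d dvd Suc N. f d)"
    by (rule sum.reindex_bij_witness[where i = "\<lambda>d. Suc N div d" and j = "\<lambda>d. Suc N div d"])
       (auto simp: div_div_eq_right elim!: dvdE)
  finally show ?case by (simp add: add.commute)
qed simp


lemma sum_div_ge_harm: "real N * harm N - real N \<le> (\<Sum>m=1..N. real (N div m))"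
proof -
  have "real N / real m - 1 \<le> real (N div m)" if "0 < m" for m
    using that of_nat_of_nat_div_aux[of N m, where 'a = real] by (simp add: divide_less_eq_1)
  then have "(\<Sum>m=1..N. real N / real m - 1) \<le> (\<Sum>m=1..N. real (N div m))"
    by (intro sum_mono) simp
  then show ?thesis
    by (simp add: harm_def sum_subtractf sum_distrib_left divide_inverse)
qed

lemma partial_sum_le_if_windows_negative:
  fixes f :: "nat \<Rightarrow> int"
  assumes windows: "\<And>n. (\<Sum>m=1..k. f (n + m)) < 0"
    and le_one: "\<And>n. 0 < n \<Longrightarrow> f n \<le> 1"
  shows "int k * (\<Sum>j=1..N. f j) \<le> int k * (int k + 1) - int N"
proof -
  have "k > 0"
    using windows[of 0] by (cases k) auto
  have shift: "(\<Sum>j=1..n + l. f j) = (\<Sum>j=1..n. f j) + (\<Sum>m=1..l. f (n + m))" for n l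
    by (induction l) simp_all
  have blocks: "(\<Sum>j=1..a * k + r. f j) \<le> int r - int a" for a r
  proof (induction a)
    case 0
    have "(\<Sum>j=1..r. f j) \<le> (\<Sum>j=1..r. 1)"
      by (intro sum_mono le_one) simp
    then show ?case by simp
  next
    case (Suc a)
    have "(\<Sum>j=1..Suc a * k + r. f j) = (\<Sum>j=1..a * k + r. f j) + (\<Sum>m=1..k. f (a * k + r + m))"
      using shift[of "a * k + r" k] by (simp add: add_ac)
    with Suc windows[of "a * k + r"] show ?case by simp
  qed
  define a r where "a = N div k" and "r = N mod k"
  have "int k * (\<Sum>j=1..N. f j) \<le> int k * (int r - int a)"
    using blocks[of a r] by (intro mult_left_mono) (simp_all add: a_def r_def)
  also have "\<dots> = (int k + 1) * int r - int N"
  proof -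
    have "N = k * a + r"
      by (simp add: a_def r_def)
    then show ?thesis by (simp add: algebra_simps)
  qed
  also have "(int k + 1) * int r \<le> (int k + 1) * int k"
    using \<open>k > 0\<close> by (intro mult_left_mono) (simp_all add: r_def)
  finally show ?thesis by (simp add: algebra_simps)
qed

locale completely_multiplicative_sign =
  fixes f :: "nat \<Rightarrow> int"
  assumes one: "f 1 = 1"
    and mult: "0 < m \<Longrightarrow> 0 < n \<Longrightarrow> f (m * n) = f m * f n"
    and prime: "prime p \<Longrightarrow> f p \<in> {1, -1}"
begin

lemma one_Suc [simp]: "f (Suc 0) = 1"
  using one by simp

lemma sign: "0 < n \<Longrightarrow> f n \<in> {1, -1}"
proof (induction n rule: prime_divisors_induct)
  case (factor p n)
  then have "f (p * n) = f p * f n"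
    by (intro mult) (auto simp: prime_gt_0_nat)
  with factor prime[of p] show ?case by auto
qed auto

lemma power: "0 < p \<Longrightarrow> f (p ^ i) = f p ^ i"
  by (induction i) (simp_all add: mult)

lemma divisor_sum_prime_power:
  assumes "prime p"
  shows "(\<Sum>d | d dvd p ^ k. f d) = (\<Sum>i\<le>k. f p ^ i)"
proof -
  have "{d. d dvd p ^ k} = (\<lambda>i. p ^ i) ` {..k}"
    using divides_primepow_nat[OF assms] by auto
  moreover have "inj_on (\<lambda>i. p ^ i) {..k}"
    using prime_gt_1_nat[OF assms] by (auto intro: inj_onI)
  ultimately show ?thesis
    using prime_gt_0_nat[OF assms] by (simp add: sum.reindex power)
qed

lemma divisor_sum_coprime_mult:
  assumes "coprime a b" "0 < a" "0 < b"
  shows "(\<Sum>d | d dvd a * b. f d) = (\<Sum>d | d dvd a. f d) * (\<Sum>d | d dvd b. f d)"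
proof -
  have "(\<Sum>d | d dvd a * b. f d) = (\<Sum>(x, y) \<in> {x. x dvd a} \<times> {y. y dvd b}. f (x * y))"
    using sum.reindex_bij_betw[OF bij_betw_divisors_coprime_mult[OF assms(1)], of f]
    by (simp add: case_prod_unfold)
  also have "\<dots> = (\<Sum>x | x dvd a. \<Sum>y | y dvd b. f x * f y)"
    using assms(2,3) by (subst sum.cartesian_product[symmetric]) (auto intro!: sum.cong mult)
  finally show ?thesis by (simp add: sum_product)
qed

lemma divisor_sum_nonneg: "0 \<le> (\<Sum>d | d dvd n. f d)"
proof (induction n rule: less_induct)
  case (less n)
  consider "n = 0" | "n = 1" | "n > 1" by linarith
  then show ?case
  proof cases
    case 3
    then obtain p where p: "prime p" "p dvd n"
      using prime_factor_nat[of n] by auto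
    define k where "k = multiplicity p n"
    obtain u where n: "n = p ^ k * u" and "\<not> p dvd u"
      unfolding k_def by (rule multiplicity_decompose'[of n p]) (use 3 p in auto)
    have "k > 0"
      using p 3 by (simp add: k_def prime_multiplicity_gt_zero_iff)
    then have "coprime (p ^ k) u"
      using p(1) \<open>\<not> p dvd u\<close> by (simp add: prime_imp_coprime)
    have "p ^ k > 1"
      using prime_gt_1_nat[OF p(1)] \<open>k > 0\<close> by (intro one_less_power) auto
    with n 3 have "u > 0" "u < n"
      by (auto intro!: gr0I)
    have "(\<Sum>d | d dvd n. f d) = (\<Sum>i\<le>k. f p ^ i) * (\<Sum>d | d dvd u. f d)"
      using n divisor_sum_coprime_mult[OF \<open>coprime (p ^ k) u\<close>] \<open>u > 0\<close> p(1)
      by (simp add: divisor_sum_prime_power prime_gt_0_nat)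
    then show ?thesis
      using sum_power_sign_nonneg[OF prime[OF p(1)]] less[OF \<open>u < n\<close>] by simp
  qed simp_all
qed

lemma sum_partial_sums_nonneg: "0 \<le> (\<Sum>m=1..N. \<Sum>j=1..N div m. f j)"
  unfolding sum_divisor_sums_eq[symmetric] by (intro sum_nonneg divisor_sum_nonneg)

lemma exists_nonneg_window: "\<exists>n. 0 \<le> (\<Sum>m=1..k. f (n + m))"
proof (rule ccontr)
  assume "\<nexists>n. 0 \<le> (\<Sum>m=1..k. f (n + m))"
  then have windows: "(\<Sum>m=1..k. f (n + m)) < 0" for n
    by (simp add: not_le)
  have le_one: "f n \<le> 1" if "0 < n" for n
    using sign[OF that] by auto
  define C where "C = int k * (int k + 1)"
  have bound: "harm N \<le> real_of_int C + 1" if "0 < N" for N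
  proof -
    have "0 \<le> (\<Sum>m=1..N. int k * (\<Sum>j=1..N div m. f j))"
      using sum_partial_sums_nonneg[of N] by (simp add: sum_distrib_left[symmetric])
    also have "\<dots> \<le> (\<Sum>m=1..N. C - int (N div m))"
      unfolding C_def by (intro sum_mono partial_sum_le_if_windows_negative windows le_one)
    finally have "(\<Sum>m=1..N. int (N div m)) \<le> int N * C"
      by (simp add: sum_subtractf)
    then have "real_of_int (\<Sum>m=1..N. int (N div m)) \<le> real_of_int (int N * C)"
      by (simp only: of_int_le_iff)
    then have "(\<Sum>m=1..N. real (N div m)) \<le> real N * of_int C"
      by simp
    with sum_div_ge_harm[of N] have "real N * harm N \<le> real N * (of_int C + 1)"
      by (simp add: algebra_simps)
    with that show ?thesis by simp
  qed
  have "eventually (\<lambda>N. real_of_int C + 2 \<le> harm N) sequentially"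
    using harm_at_top by (simp add: filterlim_at_top)
  then obtain N0 where "\<forall>N\<ge>N0. real_of_int C + 2 \<le> harm N"
    by (auto simp: eventually_sequentially)
  then have "real_of_int C + 2 \<le> harm (Suc N0)"
    by simp
  with bound[of "Suc N0"] show False
    by simp
qed

lemma window_sum_eq_neg_count: "(\<Sum>m=1..k. f (n + m)) = int k - 2 * int (neg_count f k n)"
proof -
  have "(\<Sum>m=1..k. f (n + m)) = (\<Sum>m=1..k. 1 - 2 * (if f (n + m) = -1 then 1 else 0))"
  proof (intro sum.cong refl)
    fix m assume "m \<in> {1..k}"
    then have "f (n + m) \<in> {1, -1}"
      by (intro sign) simp
    then show "f (n + m) = 1 - 2 * (if f (n + m) = -1 then 1 else 0)"
      by auto
  qed
  also have "\<dots> = int k - 2 * int (card {m \<in> {1..k}. f (n + m) = -1})"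
    by (simp add: sum_subtractf sum_distrib_left[symmetric] sum.inter_filter[symmetric])
  finally show ?thesis unfolding neg_count_def .
qed

lemma exists_window_few_negatives: "\<exists>n. 2 * neg_count f k n \<le> k"
proof -
  obtain n where "0 \<le> (\<Sum>m=1..k. f (n + m))"
    using exists_nonneg_window by blast
  then have "2 * neg_count f k n \<le> k"
    unfolding window_sum_eq_neg_count by linarith
  then show ?thesis ..
qed

end

lemma modified_char_completely_multiplicative_sign:
  assumes chi: "real_dirichlet_char q \<chi>" and f: "modified_char q \<chi> f"
  shows "completely_multiplicative_sign f"
proof
  fix p :: nat
  assume p: "prime p"
  show "f p \<in> {1, -1}"
  proof (cases "p dvd q")
    case False
    with p have "coprime p q"
      by (simp add: prime_imp_coprime)
    with chi have "\<chi> p \<in> {1, -1}"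
      unfolding real_dirichlet_char_def by blast
    with f p False show ?thesis
      unfolding modified_char_def by simp
  qed (use f p in \<open>simp add: modified_char_def\<close>)
qed (use f in \<open>simp_all add: modified_char_def\<close>)

lemma delta_le:
  assumes "\<And>q \<chi> f. 1 < q \<Longrightarrow> real_dirichlet_char q \<chi> \<Longrightarrow> modified_char q \<chi> f
             \<Longrightarrow> \<exists>n. neg_count f k n \<le> c"
  shows "delta k \<le> c"
proof -
  define S where "S = {c. \<exists>q \<chi> f. 1 < q \<and> real_dirichlet_char q \<chi> \<and> modified_char q \<chi> f \<and>
                       c = (LEAST c'. \<exists>n. neg_count f k n = c')}"
  have "x \<le> c" if "x \<in> S" for x
  proof -
    from that obtain q \<chi> f where "1 < q" "real_dirichlet_char q \<chi>" "modified_char q \<chi> f"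
        and x: "x = (LEAST c'. \<exists>n. neg_count f k n = c')"
      unfolding S_def by blast
    then obtain n where "neg_count f k n \<le> c"
      using assms by blast
    moreover have "x \<le> neg_count f k n"
      unfolding x by (rule Least_le) blast
    ultimately show ?thesis by simp
  qed
  then have "Sup S \<le> c"
    by (cases "S = {}") (auto intro: cSup_least)
  then show ?thesis
    unfolding delta_def S_def .
qed

theorem mainTheorem2:
  fixes q k :: nat and \<chi> f :: "nat \<Rightarrow> int"
  assumes "1 < q" and "real_dirichlet_char q \<chi>" and "modified_char q \<chi> f" and "1 \<le> k"
  shows "(\<exists>n::nat. (\<Sum>m=1..k. f (n + m)) \<ge> 0)
         \<and> (\<exists>n::nat. 2 * neg_count f k n \<le> k)
         \<and> 2 * delta k \<le> k"
proof -
  interpret completely_multiplicative_sign f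
    using assms(2,3) by (rule modified_char_completely_multiplicative_sign)
  have "delta k \<le> k div 2"
  proof (rule delta_le)
    fix q' \<chi>' f'
    assume "real_dirichlet_char q' \<chi>'" "modified_char q' \<chi>' f'"
    then interpret f': completely_multiplicative_sign f'
      by (rule modified_char_completely_multiplicative_sign)
    obtain n where "2 * neg_count f' k n \<le> k"
      using f'.exists_window_few_negatives by blast
    then show "\<exists>n. neg_count f' k n \<le> k div 2"
      by (intro exI[of _ n]) linarith
  qed
  then show ?thesis
    using exists_nonneg_window exists_window_few_negatives by auto
qed

end
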